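(* In the setting described in the context, assume $f$ is strongly convex with respect to the norm $\|\cdot\|_{LP^{-1}}$ with convexity parameter $\mu>0$. Choose an initial point $x_0$, target accuracy $0<\epsilon<f(x_0)-f^*$, confidence $0<\rho<1$, and $$k\geq\frac1\mu\log\frac{f(x_0)-f^*}{\epsilon\rho}.$$ If $x_k$ is the random point generated by RCDS$(p,x_0)$ applied to $f$, then $\mathbf{P}(f(x_k)-f^*\leq\epsilon)\geq1-\rho$.
   Context: Let $U\in\mathbf{R}^{N\times N}$ be a column permutation of the $N\times N$ identity matrix, partitioned as $U=[U_1,\dots,U_n]$ with $U_i\in\mathbf{R}^{N\times N_i}$, $\sum_iN_i=N$; for $x\in\mathbf{R}^N$ write $x^{(i)}=U_i^Tx$. Each $\mathbf{R}^{N_i}$ carries an arbitrary norm $\|\cdot\|_{(i)}$ with dual norm $\|s\|_{(i)}^*=\max_{\|t\|_{(i)}=1}\langle s,t\rangle$. Let $f:\mathbf{R}^N\to\mathbf{R}$ be convex and differentiable with $\|\nabla_if(x+U_it)-\nabla_if(x)\|_{(i)}^*\leq L_i\|t\|_{(i)}$ for all $x,t,i$, where $L_i>0$ and $\nabla_if(x)=U_i^T\nabla f(x)$; $f$ attains its minimum $f^*$. Let $p$ be a probability vector with all $p_i>0$, $L=\mathrm{Diag}(L_i)$, $P=\mathrm{Diag}(p_i)$, and $\|x\|_{LP^{-1}}=(\sum_i\frac{L_i}{p_i}\|x^{(i)}\|_{(i)}^2)^{1/2}$. Strong convexity w.r.t. $\|\cdot\|_{LP^{-1}}$ with parameter $\mu$: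 $f(x)\geq f(y)+\langle\nabla f(y),x-y\rangle+\frac\mu2\|x-y\|_{LP^{-1}}^2$ for all $x,y$. For $s\in\mathbf{R}^{N_i}$, $s^\#$ denotes an optimal solution of $\min_{t}\{-\langle s,t\rangle+\frac12\|t\|_{(i)}^2\}$. Algorithm RCDS$(p,x_0)$: for $k=0,1,2,\dots$, choose $i$ with probability $p_i$ (independently) and set $x_{k+1}=x_k-\frac1{L_i}U_i(\nabla_if(x_k))^\#$. *)

theory Defs
  imports "HOL-Analysis.Analysis" "HOL-Probability.Probability_Mass_Function"
begin

text \<open>Coordinates of R^N are indexed by the finite type 'n; the blocks of the
 column permutation U = [U_1,...,U_n] are the sets B i (i in the finite type 'm),
 forming a partition of the coordinates. The subspace R^{N_i} is identified with
 the vectors supported on B i, and U_i U_i^T x is the block projection blk B i x.\<close>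

definition blkspace :: "('m \<Rightarrow> 'n set) \<Rightarrow> 'm \<Rightarrow> (real^'n) set" where
  "blkspace B i = {t. \<forall>j. j \<notin> B i \<longrightarrow> t $ j = 0}"

definition blk :: "('m \<Rightarrow> 'n set) \<Rightarrow> 'm \<Rightarrow> real^'n \<Rightarrow> real^'n" where
  "blk B i x = (\<chi> j. if j \<in> B i then x $ j else 0)"

definition is_block_partition :: "('m \<Rightarrow> 'n set) \<Rightarrow> bool" where
  "is_block_partition B \<longleftrightarrow>
     (\<forall>i. B i \<noteq> {}) \<and> (\<forall>i i'. i \<noteq> i' \<longrightarrow> B i \<inter> B i' = {}) \<and> (\<Union>i. B i) = UNIV"

definition is_block_norm :: "('m \<Rightarrow> 'n set) \<Rightarrow> 'm \<Rightarrow> (real^'n \<Rightarrow> real) \<Rightarrow> bool" where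
  "is_block_norm B i nm \<longleftrightarrow>
     (\<forall>t\<in>blkspace B i. 0 \<le> nm t \<and> (nm t = 0 \<longleftrightarrow> t = 0)) \<and>
     (\<forall>t\<in>blkspace B i. \<forall>c::real. nm (c *\<^sub>R t) = \<bar>c\<bar> * nm t) \<and>
     (\<forall>s\<in>blkspace B i. \<forall>t\<in>blkspace B i. nm (s + t) \<le> nm s + nm t)"

definition dual_norm :: "('m \<Rightarrow> 'n set) \<Rightarrow> 'm \<Rightarrow> (real^'n \<Rightarrow> real) \<Rightarrow> real^'n \<Rightarrow> real" where
  "dual_norm B i nm s = Sup {s \<bullet> t | t. t \<in> blkspace B i \<and> nm t = 1}"

definition LP_norm :: "('m::finite \<Rightarrow> 'n set) \<Rightarrow> ('m \<Rightarrow> real^'n \<Rightarrow> real) \<Rightarrow> ('m \<Rightarrow> real)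
    \<Rightarrow> 'm pmf \<Rightarrow> real^'n \<Rightarrow> real" where
  "LP_norm B nm L p x = sqrt (\<Sum>i\<in>UNIV. L i / pmf p i * (nm i (blk B i x))\<^sup>2)"

text \<open>t is an optimal solution of min_t { -<s,t> + 1/2 ||t||^2 } over block i,
  i.e. t is an admissible value of s^#.\<close>
definition is_sharp :: "('m \<Rightarrow> 'n set) \<Rightarrow> 'm \<Rightarrow> (real^'n \<Rightarrow> real) \<Rightarrow> real^'n \<Rightarrow> real^'n \<Rightarrow> bool" where
  "is_sharp B i nm s t \<longleftrightarrow> t \<in> blkspace B i \<and>
     (\<forall>u\<in>blkspace B i. - (s \<bullet> t) + 1/2 * (nm t)\<^sup>2 \<le> - (s \<bullet> u) + 1/2 * (nm u)\<^sup>2)"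

definition rcds_step :: "('m \<Rightarrow> 'n set) \<Rightarrow> ('m \<Rightarrow> real) \<Rightarrow> ('m \<Rightarrow> real^'n \<Rightarrow> real^'n)
    \<Rightarrow> (real^'n \<Rightarrow> real^'n) \<Rightarrow> 'm \<Rightarrow> real^'n \<Rightarrow> real^'n" where
  "rcds_step B L sh g i x = x - (1 / L i) *\<^sub>R sh i (blk B i (g x))"

fun rcds :: "('m \<Rightarrow> 'n set) \<Rightarrow> ('m \<Rightarrow> real) \<Rightarrow> ('m \<Rightarrow> real^'n \<Rightarrow> real^'n)
    \<Rightarrow> (real^'n \<Rightarrow> real^'n) \<Rightarrow> 'm pmf \<Rightarrow> real^'n \<Rightarrow> nat \<Rightarrow> (real^'n) pmf" where
  "rcds B L sh g p x0 0 = return_pmf x0"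
| "rcds B L sh g p x0 (Suc k) =
     bind_pmf (rcds B L sh g p x0 k) (\<lambda>x. map_pmf (\<lambda>i. rcds_step B L sh g i x) p)"

end

theory Submission
  imports Defs
begin

text \<open>Along block i, f lies below its quadratic model with constant L i (block descent lemma),
  and the RCDS step minimises that model, so it decreases f at least as much as any block vector.
  Testing block i with the piece blk B i w / pmf p i of w = \<mu> (xopt - x) and averaging over the
  random block, the pieces recombine into w, and strong convexity in the norm weighted by
  L i / pmf p i gives E f(x_(k+1)) - f xopt \<le> (1 - \<mu>) (E f(x_k) - f xopt). So the expected gap
  after k steps is at most exp(-\<mu> k) (f x0 - f xopt) \<le> \<epsilon> \<rho>, and Markov's inequality concludes.\<close>

lemma subspace_blkspace: "subspace (blkspace B i)"
  by (auto simp: subspace_def blkspace_def)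

lemma closed_blkspace: "closed (blkspace B i)"
  by (rule closed_subspace[OF subspace_blkspace])

lemma blk_in_blkspace: "blk B i x \<in> blkspace B i"
  by (simp add: blkspace_def blk_def)

lemma inner_blk_left: "v \<in> blkspace B i \<Longrightarrow> blk B i y \<bullet> v = y \<bullet> v"
  unfolding inner_vec_def blk_def blkspace_def by (intro sum.cong) auto

lemma blk_scaleR: "blk B i (c *\<^sub>R x) = c *\<^sub>R blk B i x"
  by (simp add: blk_def vec_eq_iff)

lemma sum_blk:
  fixes B :: "'m::finite \<Rightarrow> 'n::finite set"
  assumes "is_block_partition B"
  shows "(\<Sum>i\<in>UNIV. blk B i x) = x"
proof -
  have "(\<Sum>i\<in>UNIV. blk B i x) $ j = x $ j" for j
  proof -
    obtain i0 where i0: "j \<in> B i0" using assms unfolding is_block_partition_def by blast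
    have "j \<in> B i \<longleftrightarrow> i = i0" for i
      using assms i0 unfolding is_block_partition_def by blast
    then show ?thesis by (simp add: blk_def if_distrib cong: if_cong)
  qed
  then show ?thesis by (simp add: vec_eq_iff)
qed

context
  fixes B :: "'m \<Rightarrow> 'n::finite set" and i :: 'm and nm :: "real^'n \<Rightarrow> real"
  assumes block_norm: "is_block_norm B i nm"
begin

lemma block_norm_nonneg: "t \<in> blkspace B i \<Longrightarrow> 0 \<le> nm t"
  and block_norm_eq_0_iff: "t \<in> blkspace B i \<Longrightarrow> nm t = 0 \<longleftrightarrow> t = 0"
  and block_norm_scaleR: "t \<in> blkspace B i \<Longrightarrow> nm (c *\<^sub>R t) = \<bar>c\<bar> * nm t"
  and block_norm_triangle: "s \<in> blkspace B i \<Longrightarrow> t \<in> blkspace B i \<Longrightarrow> nm (s + t) \<le> nm s + nm t"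
  using block_norm unfolding is_block_norm_def by blast+

lemma block_norm_zero: "nm 0 = 0"
  using block_norm_eq_0_iff[OF subspace_0[OF subspace_blkspace]] by simp

lemma block_norm_pos: "t \<in> blkspace B i \<Longrightarrow> t \<noteq> 0 \<Longrightarrow> 0 < nm t"
  using block_norm_nonneg block_norm_eq_0_iff by fastforce

lemma block_norm_sum_le:
  assumes "finite S" "v ` S \<subseteq> blkspace B i"
  shows "nm (\<Sum>j\<in>S. v j) \<le> (\<Sum>j\<in>S. nm (v j))"
  using assms
proof (induction S rule: finite_induct)
  case empty
  show ?case by (simp add: block_norm_zero)
next
  case (insert a S)
  then have "nm (v a + sum v S) \<le> nm (v a) + nm (sum v S)"
    by (intro block_norm_triangle subspace_sum[OF subspace_blkspace]) auto
  with insert show ?case by simp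
qed

lemma block_norm_le_norm: "\<exists>K\<ge>0. \<forall>t\<in>blkspace B i. nm t \<le> K * norm t"
proof (intro exI conjI ballI)
  define K where "K = (\<Sum>j\<in>B i. nm (axis j 1))"
  have axis: "j \<in> B i \<Longrightarrow> c *\<^sub>R axis j 1 \<in> blkspace B i" for j c
    by (auto simp: blkspace_def axis_def)
  show "0 \<le> K"
    unfolding K_def using axis[of _ 1] by (auto intro: sum_nonneg block_norm_nonneg)
  fix t assume t: "t \<in> blkspace B i"
  have "t = (\<Sum>j\<in>B i. t $ j *\<^sub>R axis j 1)"
    using t by (auto simp: vec_eq_iff axis_def blkspace_def if_distrib cong: if_cong)
  then have "nm t \<le> (\<Sum>j\<in>B i. nm (t $ j *\<^sub>R axis j 1))"
    using block_norm_sum_le[of "B i" "\<lambda>j. t $ j *\<^sub>R axis j 1"] axis by auto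
  also have "\<dots> = (\<Sum>j\<in>B i. \<bar>t $ j\<bar> * nm (axis j 1))"
    using axis[of _ 1] by (intro sum.cong) (auto simp: block_norm_scaleR)
  also have "\<dots> \<le> (\<Sum>j\<in>B i. norm t * nm (axis j 1))"
    using axis[of _ 1]
    by (intro sum_mono mult_right_mono block_norm_nonneg) (auto simp: component_le_norm_cart)
  also have "\<dots> = K * norm t"
    by (simp add: K_def sum_distrib_left mult.commute)
  finally show "nm t \<le> K * norm t" .
qed

lemma continuous_on_block_norm: "continuous_on (blkspace B i) nm"
proof -
  obtain K where K: "K \<ge> 0" "\<And>t. t \<in> blkspace B i \<Longrightarrow> nm t \<le> K * norm t"
    using block_norm_le_norm by blast
  have "dist (nm s) (nm t) \<le> K * dist s t"
    if "s \<in> blkspace B i" "t \<in> blkspace B i" for s t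
  proof -
    have st: "s - t \<in> blkspace B i" "t - s \<in> blkspace B i"
      using that by (auto intro: subspace_diff[OF subspace_blkspace])
    have "nm (t - s) = nm (s - t)"
      using block_norm_scaleR[OF st(1), of "-1"] by simp
    moreover have "nm s \<le> nm (s - t) + nm t" "nm t \<le> nm (t - s) + nm s"
      using block_norm_triangle[OF st(1) that(2)] block_norm_triangle[OF st(2) that(1)] by simp_all
    ultimately show ?thesis
      using K(2)[OF st(1)] by (simp add: dist_real_def dist_norm)
  qed
  then have "K-lipschitz_on (blkspace B i) nm"
    using K(1) by (intro lipschitz_onI) auto
  then show ?thesis by (rule lipschitz_on_continuous_on)
qed

text \<open>The norm attains a positive minimum on the compact unit sphere of the block.\<close>
lemma block_norm_ge_norm: "\<exists>m>0. \<forall>t\<in>blkspace B i. m * norm t \<le> nm t"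
proof -
  define S where "S = blkspace B i \<inter> sphere 0 1"
  have normalize: "t /\<^sub>R norm t \<in> S" if "t \<in> blkspace B i" "t \<noteq> 0" for t
    using that subspace_scale[OF subspace_blkspace] by (auto simp: S_def)
  have scaled: "nm t = norm t * nm (t /\<^sub>R norm t)" if "t \<in> blkspace B i" for t
    using that by (cases "t = 0") (auto simp: block_norm_scaleR block_norm_zero)
  show ?thesis
  proof (cases "S = {}")
    case True
    then have "t = 0" if "t \<in> blkspace B i" for t
      using normalize[OF that] by blast
    then show ?thesis by (intro exI[of _ 1]) (force simp: block_norm_zero)
  next
    case False
    have "compact S"
      unfolding S_def by (intro closed_Int_compact closed_blkspace compact_sphere)
    then obtain x where x: "x \<in> S" and min: "\<And>y. y \<in> S \<Longrightarrow> nm x \<le> nm y"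
      using continuous_attains_inf[OF _ False continuous_on_subset[OF continuous_on_block_norm]]
      unfolding S_def by blast
    have "nm x * norm t \<le> nm t" if "t \<in> blkspace B i" for t
      using that min[OF normalize[OF that]] scaled[OF that]
      by (cases "t = 0") (auto simp: block_norm_zero mult.commute)
    moreover have "0 < nm x"
      using x by (intro block_norm_pos) (auto simp: S_def)
    ultimately show ?thesis by blast
  qed
qed

lemma inner_le_dual_norm_mult:
  assumes v: "v \<in> blkspace B i"
  shows "a \<bullet> v \<le> dual_norm B i nm a * nm v"
proof (cases "v = 0")
  case True
  then show ?thesis by (simp add: block_norm_zero)
next
  case False
  obtain m where m: "m > 0" "\<And>t. t \<in> blkspace B i \<Longrightarrow> m * norm t \<le> nm t"
    using block_norm_ge_norm by blast
  have "a \<bullet> t \<le> norm a / m" if "t \<in> blkspace B i" "nm t = 1" for t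
  proof -
    have "a \<bullet> t \<le> norm a * norm t" by (rule norm_cauchy_schwarz)
    also have "\<dots> \<le> norm a * (1 / m)"
      using m(1) m(2)[OF that(1)] that(2) by (intro mult_left_mono) (auto simp: field_simps)
    finally show ?thesis by simp
  qed
  then have bdd: "bdd_above {a \<bullet> t | t. t \<in> blkspace B i \<and> nm t = 1}"
    by (intro bdd_aboveI) blast
  have pos: "0 < nm v" using block_norm_pos[OF v False] .
  have "v /\<^sub>R nm v \<in> blkspace B i" "nm (v /\<^sub>R nm v) = 1"
    using v pos subspace_scale[OF subspace_blkspace] by (auto simp: block_norm_scaleR)
  then have "a \<bullet> (v /\<^sub>R nm v) \<le> dual_norm B i nm a"
    unfolding dual_norm_def by (intro cSup_upper[OF _ bdd]) blast
  then show ?thesis using pos by (simp add: field_simps)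
qed

end


lemma block_descent:
  fixes f :: "real^'n::finite \<Rightarrow> real"
  assumes block_norm: "is_block_norm B i nm"
    and grad: "\<And>x. (f has_derivative (\<lambda>h. g x \<bullet> h)) (at x)"
    and lip: "\<And>x t. t \<in> blkspace B i \<Longrightarrow>
               dual_norm B i nm (blk B i (g (x + t)) - blk B i (g x)) \<le> L * nm t"
    and v: "v \<in> blkspace B i"
  shows "f (x + v) \<le> f x + g x \<bullet> v + L / 2 * (nm v)\<^sup>2"
proof -
  define \<phi> where "\<phi> \<tau> = f (x + \<tau> *\<^sub>R v) - \<tau> * (g x \<bullet> v) - L / 2 * \<tau>\<^sup>2 * (nm v)\<^sup>2" for \<tau>
  define \<phi>' where "\<phi>' \<tau> = g (x + \<tau> *\<^sub>R v) \<bullet> v - g x \<bullet> v - L * \<tau> * (nm v)\<^sup>2" for \<tau>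
  have der: "(\<phi> has_real_derivative \<phi>' \<tau>) (at \<tau>)" for \<tau>
  proof -
    have "((\<lambda>\<tau>. f (x + \<tau> *\<^sub>R v)) has_derivative (\<lambda>h. g (x + \<tau> *\<^sub>R v) \<bullet> (h *\<^sub>R v))) (at \<tau>)"
      by (rule has_derivative_compose[OF _ grad]) (auto intro!: derivative_eq_intros)
    then have "((\<lambda>\<tau>. f (x + \<tau> *\<^sub>R v)) has_real_derivative (g (x + \<tau> *\<^sub>R v) \<bullet> v)) (at \<tau>)"
      unfolding has_field_derivative_def by (rule has_derivative_eq_rhs) (auto simp: fun_eq_iff)
    then show ?thesis
      unfolding \<phi>_def \<phi>'_def by (auto intro!: derivative_eq_intros)
  qed
  have "\<phi>' \<tau> \<le> 0" if "0 < \<tau>" for \<tau>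
  proof -
    have \<tau>v: "\<tau> *\<^sub>R v \<in> blkspace B i"
      using v by (rule subspace_scale[OF subspace_blkspace])
    have "g (x + \<tau> *\<^sub>R v) \<bullet> v - g x \<bullet> v = (blk B i (g (x + \<tau> *\<^sub>R v)) - blk B i (g x)) \<bullet> v"
      using inner_blk_left[OF v] by (simp add: inner_diff_left)
    also have "\<dots> \<le> dual_norm B i nm (blk B i (g (x + \<tau> *\<^sub>R v)) - blk B i (g x)) * nm v"
      by (rule inner_le_dual_norm_mult[OF block_norm v])
    also have "\<dots> \<le> L * nm (\<tau> *\<^sub>R v) * nm v"
      by (intro mult_right_mono lip \<tau>v block_norm_nonneg[OF block_norm v])
    also have "\<dots> = L * \<tau> * (nm v)\<^sup>2"
      using block_norm_scaleR[OF block_norm v, of \<tau>] that by (simp add: power2_eq_square)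
    finally show ?thesis by (simp add: \<phi>'_def)
  qed
  then have "\<phi> 1 \<le> \<phi> 0"
    using der
    by (intro DERIV_nonpos_imp_decreasing_open[of 0 1])
       (auto intro: DERIV_isCont continuous_at_imp_continuous_on)
  then show ?thesis unfolding \<phi>_def by simp
qed

text \<open>After the substitution t = L u, t minimises the quadratic upper model of block_descent.\<close>
lemma sharp_step_le:
  fixes f :: "real^'n::finite \<Rightarrow> real"
  assumes block_norm: "is_block_norm B i nm"
    and grad: "\<And>x. (f has_derivative (\<lambda>h. g x \<bullet> h)) (at x)"
    and L: "L > 0"
    and lip: "\<And>x t. t \<in> blkspace B i \<Longrightarrow>
               dual_norm B i nm (blk B i (g (x + t)) - blk B i (g x)) \<le> L * nm t"
    and sharp: "is_sharp B i nm (blk B i (g x)) t"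
    and u: "u \<in> blkspace B i"
  shows "f (x - (1 / L) *\<^sub>R t) \<le> f x - g x \<bullet> u + L / 2 * (nm u)\<^sup>2"
proof -
  define s where "s = blk B i (g x)"
  have t: "t \<in> blkspace B i"
    and min: "\<And>w. w \<in> blkspace B i \<Longrightarrow> - (s \<bullet> t) + 1/2 * (nm t)\<^sup>2 \<le> - (s \<bullet> w) + 1/2 * (nm w)\<^sup>2"
    using sharp unfolding is_sharp_def s_def by auto
  define v where "v = - ((1 / L) *\<^sub>R t)"
  have v: "v \<in> blkspace B i"
    unfolding v_def using t by (intro subspace_neg subspace_scale subspace_blkspace)
  have nm_v: "nm v = nm t / L"
    using block_norm_scaleR[OF block_norm t, of "- (1 / L)"] L by (simp add: v_def)
  have "f (x - (1 / L) *\<^sub>R t) = f (x + v)" by (simp add: v_def)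
  also have "\<dots> \<le> f x + g x \<bullet> v + L / 2 * (nm v)\<^sup>2"
    by (intro block_descent[OF block_norm grad] lip v)
  also have "\<dots> = f x + (1 / L) * (- (s \<bullet> t) + 1/2 * (nm t)\<^sup>2)"
    using L inner_blk_left[OF t, of "g x"]
    by (simp add: s_def nm_v power2_eq_square field_simps, simp add: v_def)
  also have "\<dots> \<le> f x + (1 / L) * (- (s \<bullet> (L *\<^sub>R u)) + 1/2 * (nm (L *\<^sub>R u))\<^sup>2)"
    using L min[OF subspace_scale[OF subspace_blkspace u]] by (intro add_left_mono mult_left_mono) auto
  also have "\<dots> = f x - g x \<bullet> u + L / 2 * (nm u)\<^sup>2"
    using L inner_blk_left[OF u, of "g x"] block_norm_scaleR[OF block_norm u]
    by (simp add: s_def power2_eq_square field_simps)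
  finally show ?thesis .
qed

lemma LP_norm_power2:
  assumes "\<And>i. L i \<ge> 0" "\<And>i. pmf p i > 0"
  shows "(LP_norm B nm L p x)\<^sup>2 = (\<Sum>i\<in>UNIV. L i / pmf p i * (nm i (blk B i x))\<^sup>2)"
  unfolding LP_norm_def using assms by (simp add: less_imp_le sum_nonneg)

lemma LP_norm_scaleR:
  assumes "\<And>i. is_block_norm B i (nm i)"
  shows "LP_norm B nm L p (c *\<^sub>R x) = \<bar>c\<bar> * LP_norm B nm L p x"
proof -
  have "(\<Sum>i\<in>UNIV. L i / pmf p i * (nm i (blk B i (c *\<^sub>R x)))\<^sup>2)
      = c\<^sup>2 * (\<Sum>i\<in>UNIV. L i / pmf p i * (nm i (blk B i x))\<^sup>2)"
    using block_norm_scaleR[OF assms blk_in_blkspace]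
    by (simp add: blk_scaleR sum_distrib_left power_mult_distrib algebra_simps)
  then show ?thesis
    unfolding LP_norm_def by (simp add: real_sqrt_mult)
qed

locale rcds_setting =
  fixes B :: "'m::finite \<Rightarrow> 'n::finite set"
    and nm :: "'m \<Rightarrow> real^'n \<Rightarrow> real"
    and f :: "real^'n \<Rightarrow> real"
    and g :: "real^'n \<Rightarrow> real^'n"
    and L :: "'m \<Rightarrow> real"
    and p :: "'m pmf"
    and sh :: "'m \<Rightarrow> real^'n \<Rightarrow> real^'n"
    and \<mu> :: real
  assumes part: "is_block_partition B"
    and norms: "\<And>i. is_block_norm B i (nm i)"
    and grad: "\<And>x. (f has_derivative (\<lambda>h. g x \<bullet> h)) (at x)"
    and Lpos: "\<And>i. L i > 0"
    and lip: "\<And>x t i. t \<in> blkspace B i \<Longrightarrow>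
               dual_norm B i (nm i) (blk B i (g (x + t)) - blk B i (g x)) \<le> L i * nm i t"
    and ppos: "\<And>i. pmf p i > 0"
    and sharp: "\<And>i s. s \<in> blkspace B i \<Longrightarrow> is_sharp B i (nm i) s (sh i s)"
    and strconv: "\<And>x y. f x \<ge> f y + g y \<bullet> (x - y) + \<mu> / 2 * (LP_norm B nm L p (x - y))\<^sup>2"
    and mupos: "\<mu> > 0"
begin

lemma expected_step_le: "(\<Sum>i\<in>UNIV. pmf p i * f (rcds_step B L sh g i x)) \<le> (1 - \<mu>) * f x + \<mu> * f y"
proof -
  define w where "w = \<mu> *\<^sub>R (y - x)"
  have LP_w: "LP_norm B nm L p w = \<mu> * LP_norm B nm L p (y - x)"
    unfolding w_def LP_norm_scaleR[OF norms] using mupos by simp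
  have step: "pmf p i * f (rcds_step B L sh g i x)
      \<le> pmf p i * f x + g x \<bullet> blk B i w + L i / pmf p i * (nm i (blk B i w))\<^sup>2 / 2" for i
  proof -
    define u where "u = (- 1 / pmf p i) *\<^sub>R blk B i w"
    have u: "u \<in> blkspace B i"
      unfolding u_def by (intro subspace_scale subspace_blkspace blk_in_blkspace)
    have nm_u: "nm i u = nm i (blk B i w) / pmf p i"
      using ppos[of i] block_norm_scaleR[OF norms blk_in_blkspace, where c = "- 1 / pmf p i"]
      by (simp add: u_def)
    have inner_u: "g x \<bullet> u = - (g x \<bullet> blk B i w) / pmf p i"
      by (simp add: u_def)
    have "f (rcds_step B L sh g i x) \<le> f x - g x \<bullet> u + L i / 2 * (nm i u)\<^sup>2"
      unfolding rcds_step_def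
      by (rule sharp_step_le[OF norms grad Lpos lip sharp[OF blk_in_blkspace] u])
    also have "\<dots> = f x + (g x \<bullet> blk B i w + L i / pmf p i * (nm i (blk B i w))\<^sup>2 / 2) / pmf p i"
      using ppos[of i] by (simp add: nm_u inner_u power2_eq_square field_simps)
    finally have "f (rcds_step B L sh g i x)
        \<le> f x + (g x \<bullet> blk B i w + L i / pmf p i * (nm i (blk B i w))\<^sup>2 / 2) / pmf p i" .
    then show ?thesis
      using ppos[of i] by (simp add: field_simps)
  qed
  have "(\<Sum>i\<in>UNIV. pmf p i * f (rcds_step B L sh g i x))
      \<le> (\<Sum>i\<in>UNIV. pmf p i * f x + g x \<bullet> blk B i w + L i / pmf p i * (nm i (blk B i w))\<^sup>2 / 2)"
    by (intro sum_mono step)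
  also have "\<dots> = f x + g x \<bullet> w + (LP_norm B nm L p w)\<^sup>2 / 2"
    using Lpos ppos sum_pmf_eq_1[of UNIV p]
    by (simp add: sum.distrib sum_divide_distrib sum_blk[OF part] LP_norm_power2 less_imp_le
        flip: sum_distrib_right inner_sum_right)
  also have "\<dots> = f x + \<mu> * (g x \<bullet> (y - x) + \<mu> / 2 * (LP_norm B nm L p (y - x))\<^sup>2)"
    using mupos unfolding LP_w by (simp add: w_def power2_eq_square algebra_simps)
  also have "\<dots> \<le> f x + \<mu> * (f y - f x)"
    using strconv[where x = y and y = x] mupos by (intro add_left_mono mult_left_mono) auto
  finally show ?thesis by (simp add: algebra_simps)
qed

end

lemma le_exp_decay:
  fixes r :: "nat \<Rightarrow> real"
  assumes step: "\<And>k. r (Suc k) \<le> (1 - \<mu>) * r k" and nonneg: "\<And>k. 0 \<le> r k"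
  shows "r k \<le> exp (- \<mu> * k) * r 0"
proof (induction k)
  case (Suc k)
  have "r (Suc k) \<le> max 0 (1 - \<mu>) * r k"
    using step[of k] mult_right_mono[OF max.cobounded2 nonneg[of k]] by (rule order_trans)
  also have "\<dots> \<le> exp (- \<mu>) * (exp (- \<mu> * k) * r 0)"
    using Suc exp_ge_add_one_self[of "- \<mu>"] nonneg[of k]
    by (intro mult_mono) auto
  also have "\<dots> = exp (- \<mu> * Suc k) * r 0"
    by (simp add: algebra_simps flip: exp_add)
  finally show ?case .
qed simp

lemma integral_bind_pmf_finite:
  fixes h :: "'b \<Rightarrow> real"
  assumes M: "finite (set_pmf M)" and N: "\<And>x. x \<in> set_pmf M \<Longrightarrow> finite (set_pmf (N x))"
  shows "measure_pmf.expectation (bind_pmf M N) h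
       = measure_pmf.expectation M (\<lambda>x. measure_pmf.expectation (N x) h)"
proof -
  define S where "S = (\<Union>x\<in>set_pmf M. set_pmf (N x))"
  have S: "finite S" unfolding S_def using M N by auto
  have N_S: "measure_pmf.expectation (N x) h = (\<Sum>y\<in>S. h y * pmf (N x) y)" if "x \<in> set_pmf M" for x
    using that by (intro integral_measure_pmf_real[OF S]) (auto simp: S_def)
  have pmf_bind_sum: "pmf (bind_pmf M N) y = (\<Sum>x\<in>set_pmf M. pmf (N x) y * pmf M x)" for y
    unfolding pmf_bind by (rule integral_measure_pmf_real[OF M]) auto
  have "measure_pmf.expectation (bind_pmf M N) h = (\<Sum>y\<in>S. h y * pmf (bind_pmf M N) y)"
    by (rule integral_measure_pmf_real[OF S]) (auto simp: S_def)
  also have "\<dots> = (\<Sum>y\<in>S. \<Sum>x\<in>set_pmf M. h y * pmf (N x) y * pmf M x)"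
    by (simp add: pmf_bind_sum sum_distrib_left mult.assoc)
  also have "\<dots> = (\<Sum>x\<in>set_pmf M. measure_pmf.expectation (N x) h * pmf M x)"
    by (subst sum.swap) (simp add: N_S sum_distrib_right)
  also have "\<dots> = measure_pmf.expectation M (\<lambda>x. measure_pmf.expectation (N x) h)"
    by (rule integral_measure_pmf_real[OF M, symmetric]) auto
  finally show ?thesis .
qed

lemma finite_set_pmf_rcds:
  fixes B :: "'m::finite \<Rightarrow> 'n::finite set"
  shows "finite (set_pmf (rcds B L sh g p x0 k))"
  by (induction k) auto

context rcds_setting
begin

lemma expectation_rcds_Suc_le:
  "measure_pmf.expectation (rcds B L sh g p x0 (Suc k)) f
     \<le> (1 - \<mu>) * measure_pmf.expectation (rcds B L sh g p x0 k) f + \<mu> * f y"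
proof -
  let ?M = "rcds B L sh g p x0 k"
  have "measure_pmf.expectation (rcds B L sh g p x0 (Suc k)) f
      = measure_pmf.expectation ?M (\<lambda>x. \<Sum>i\<in>UNIV. pmf p i * f (rcds_step B L sh g i x))"
    using finite_set_pmf_rcds[of B]
    by (simp add: integral_bind_pmf_finite integral_measure_pmf_real[of UNIV] mult.commute)
  also have "\<dots> \<le> measure_pmf.expectation ?M (\<lambda>x. (1 - \<mu>) * f x + \<mu> * f y)"
    by (intro integral_mono integrable_measure_pmf_finite finite_set_pmf_rcds expected_step_le)
  also have "\<dots> = (1 - \<mu>) * measure_pmf.expectation ?M f + \<mu> * f y"
    by (simp add: integrable_measure_pmf_finite finite_set_pmf_rcds)
  finally show ?thesis .
qed

lemma expected_gap_rcds_le: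
  assumes opt: "\<And>z. f y \<le> f z"
  shows "measure_pmf.expectation (rcds B L sh g p x0 k) (\<lambda>x. f x - f y) \<le> exp (- \<mu> * k) * (f x0 - f y)"
proof -
  define r where "r k = measure_pmf.expectation (rcds B L sh g p x0 k) (\<lambda>x. f x - f y)" for k
  have r: "r k = measure_pmf.expectation (rcds B L sh g p x0 k) f - f y" for k
    unfolding r_def by (simp add: integrable_measure_pmf_finite finite_set_pmf_rcds)
  have "r k \<le> exp (- \<mu> * k) * r 0"
  proof (rule le_exp_decay)
    show "r (Suc k) \<le> (1 - \<mu>) * r k" for k
      using expectation_rcds_Suc_le[of x0 k y] by (simp add: r algebra_simps)
    show "0 \<le> r k" for k
      unfolding r_def using opt by (intro integral_nonneg_AE) auto
  qed
  then show ?thesis by (simp add: r_def)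
qed

end

theorem theorem12:
  fixes B :: "'m::finite \<Rightarrow> 'n::finite set"
    and nm :: "'m \<Rightarrow> real^'n \<Rightarrow> real"
    and f :: "real^'n \<Rightarrow> real"
    and g :: "real^'n \<Rightarrow> real^'n"
    and L :: "'m \<Rightarrow> real"
    and p :: "'m pmf"
    and sh :: "'m \<Rightarrow> real^'n \<Rightarrow> real^'n"
    and xopt x0 :: "real^'n"
    and \<mu> \<epsilon> \<rho> :: real
    and k :: nat
  assumes part: "is_block_partition B"
    and norms: "\<And>i. is_block_norm B i (nm i)"
    and conv: "convex_on UNIV f"
    and grad: "\<And>x. (f has_derivative (\<lambda>h. g x \<bullet> h)) (at x)"
    and Lpos: "\<And>i. L i > 0"
    and lip: "\<And>x t i. t \<in> blkspace B i \<Longrightarrow>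
               dual_norm B i (nm i) (blk B i (g (x + t)) - blk B i (g x)) \<le> L i * nm i t"
    and opt: "\<And>y. f xopt \<le> f y"
    and ppos: "\<And>i. pmf p i > 0"
    and sharp: "\<And>i s. s \<in> blkspace B i \<Longrightarrow> is_sharp B i (nm i) s (sh i s)"
    and strconv: "\<And>x y. f x \<ge> f y + g y \<bullet> (x - y) + \<mu> / 2 * (LP_norm B nm L p (x - y))\<^sup>2"
    and mupos: "\<mu> > 0"
    and eps: "0 < \<epsilon>" "\<epsilon> < f x0 - f xopt"
    and rho: "0 < \<rho>" "\<rho> < 1"
    and kbound: "real k \<ge> 1 / \<mu> * ln ((f x0 - f xopt) / (\<epsilon> * \<rho>))"
  shows "measure_pmf.prob (rcds B L sh g p x0 k) {x. f x - f xopt \<le> \<epsilon>} \<ge> 1 - \<rho>"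
proof -
  interpret rcds_setting B nm f g L p sh \<mu>
    using part norms grad Lpos lip ppos sharp strconv mupos by unfold_locales
  let ?M = "rcds B L sh g p x0 k"
  have "ln ((f x0 - f xopt) / (\<epsilon> * \<rho>)) \<le> \<mu> * k"
    using kbound mupos by (simp add: field_simps)
  then have "exp (- \<mu> * k) \<le> exp (- ln ((f x0 - f xopt) / (\<epsilon> * \<rho>)))"
    by simp
  also have "\<dots> = \<epsilon> * \<rho> / (f x0 - f xopt)"
    using eps rho by (simp add: exp_minus)
  finally have "exp (- \<mu> * k) * (f x0 - f xopt) \<le> \<epsilon> * \<rho>"
    using eps by (simp add: field_simps)
  then have expectation_le: "measure_pmf.expectation ?M (\<lambda>x. f x - f xopt) \<le> \<epsilon> * \<rho>"
    using expected_gap_rcds_le[OF opt, of x0 k] by linarith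
  have "measure_pmf.prob ?M {x. \<epsilon> \<le> f x - f xopt}
      \<le> measure_pmf.expectation ?M (\<lambda>x. f x - f xopt) / \<epsilon>"
    using integral_Markov_inequality_measure[of ?M "\<lambda>x. f x - f xopt" UNIV \<epsilon>] opt eps
    by (simp add: integrable_measure_pmf_finite finite_set_pmf_rcds)
  also have "\<dots> \<le> \<rho>"
    using expectation_le eps by (simp add: divide_le_eq mult.commute)
  finally have "measure_pmf.prob ?M {x. \<epsilon> \<le> f x - f xopt} \<le> \<rho>" .
  moreover have "measure_pmf.prob ?M {x. f x - f xopt \<le> \<epsilon>} = 1 - measure_pmf.prob ?M {x. \<epsilon> < f x - f xopt}"
    using measure_pmf.prob_compl[of "{x. \<epsilon> < f x - f xopt}" ?M]
    by (simp add: Compl_eq_Diff_UNIV[symmetric] Compl_eq not_less)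
  moreover have "measure_pmf.prob ?M {x. \<epsilon> < f x - f xopt} \<le> measure_pmf.prob ?M {x. \<epsilon> \<le> f x - f xopt}"
    by (intro measure_pmf.finite_measure_mono) auto
  ultimately show ?thesis by linarith
qed

end
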